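(* Let $d\geq 1$. For every $d$-dimensional cube tiling $\mathcal{T}$ one has $m_2(\mathcal{T})\le m_2(\mathcal{R})$, where $\mathcal{R}$ is the regular cube tiling $\{z+[0,2[^d : z\in 2\mathbb{Z}^d\}$; i.e. the regular cube tiling has the highest second moment among cube tilings.
   Context: A $d$-dimensional cube tiling is a $4\mathbb{Z}^d$-invariant tiling of $\mathbb{R}^d$ by translates $y+[0,2[^d$ with $y\in\mathbb{Z}^d$. For $z\in\mathbb{Z}^d$, $N_z(\mathcal{T})$ is the number of cubes of $\mathcal{T}$ contained in $z+[0,4[^d$, and the second moment is $m_2(\mathcal{T})=4^{-d}\sum_{z\in\{0,1,2,3\}^d}N_z(\mathcal{T})^2$. *)

theory Defs
  imports "HOL-Analysis.Analysis"
begin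

text \<open>A tiling is represented by its set of translation vectors y in Z^d;
  the dimension d is CARD('n) of a finite index type.\<close>

definition cube :: "int ^ 'n \<Rightarrow> (real ^ 'n) set" where
  "cube y = {x. \<forall>i. real_of_int (y $ i) \<le> x $ i \<and> x $ i < real_of_int (y $ i) + 2}"

definition box4 :: "int ^ 'n \<Rightarrow> (real ^ 'n) set" where
  "box4 z = {x. \<forall>i. real_of_int (z $ i) \<le> x $ i \<and> x $ i < real_of_int (z $ i) + 4}"

definition cube_tiling :: "(int ^ 'n::finite) set \<Rightarrow> bool" where
  "cube_tiling T \<longleftrightarrow>
     (\<forall>x :: real ^ 'n. \<exists>!y. y \<in> T \<and> x \<in> cube y) \<and>
     (\<forall>y\<in>T. \<forall>k :: int ^ 'n. y + 4 * k \<in> T)"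

definition N_count :: "(int ^ 'n::finite) set \<Rightarrow> int ^ 'n \<Rightarrow> nat" where
  "N_count T z = card {y \<in> T. cube y \<subseteq> box4 z}"

definition second_moment :: "(int ^ 'n::finite) set \<Rightarrow> real" where
  "second_moment T = (1 / 4 ^ CARD('n)) *
     (\<Sum>z \<in> {z :: int ^ 'n. \<forall>i. z $ i \<in> {0..3}}. real (N_count T z) ^ 2)"

definition regular_tiling :: "(int ^ 'n::finite) set" where
  "regular_tiling = {z. \<forall>i. even (z $ i)}"

end

theory Submission
  imports Defs
begin

text \<open>
  Write the sum of \<open>N_z^2\<close> over a period as a sum over pairs (z, y) of a window z and a tile
  y inside it. Reducing y modulo 4 sends these pairs injectively to pairs (t, s) of a tile t in
  the fundamental box \<open>{0..3}^d\<close> and the offset \<open>s = y - z \<in> {0,1,2}^d\<close>, and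
  \<open>N_z = N_(t-s)\<close> by periodicity. Distinct tiles differ by at least 2 in some coordinate, so at
  most \<open>2^d\<close> tiles lie in the fundamental box, and for fixed t the sum over s of \<open>N_(t-s)\<close>
  weights each tile y near t by \<open>\<Prod>i. 3 - |y_i - t_i|\<close>, which over such a separated family
  adds up to at most \<open>5^d\<close>. Hence \<open>m_2 \<le> (10/4)^d\<close>; the regular tiling, with
  \<open>N_z = 2^#{i. z_i even}\<close>, attains this value.
\<close>

definition vec_Pi :: "('n::finite \<Rightarrow> 'a set) \<Rightarrow> ('a ^ 'n) set" where
  "vec_Pi A = {v. \<forall>i. v $ i \<in> A i}"

lemma inj_on_vec_lambda: "inj_on vec_lambda X"
  by (simp add: inj_on_def vec_lambda_inject)

lemma vec_Pi_eq_image_PiE: "vec_Pi A = vec_lambda ` PiE UNIV A"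
proof
  show "vec_Pi A \<subseteq> vec_lambda ` PiE UNIV A"
  proof
    fix v assume "v \<in> vec_Pi A"
    then have "vec_nth v \<in> PiE UNIV A" by (auto simp: vec_Pi_def)
    then show "v \<in> vec_lambda ` PiE UNIV A" by (metis image_eqI vec_nth_inverse)
  qed
qed (auto simp: vec_Pi_def)

lemma finite_vec_Pi: "(\<And>i. finite (A i)) \<Longrightarrow> finite (vec_Pi A)"
  unfolding vec_Pi_eq_image_PiE by (intro finite_imageI finite_PiE) auto

lemma card_vec_Pi: "card (vec_Pi A) = (\<Prod>i\<in>UNIV. card (A i))"
  unfolding vec_Pi_eq_image_PiE by (simp add: card_image[OF inj_on_vec_lambda] card_PiE)

lemma sum_prod_vec_Pi:
  fixes h :: "'n::finite \<Rightarrow> 'a \<Rightarrow> 'c::comm_semiring_1"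
  assumes "\<And>i. finite (A i)"
  shows "(\<Sum>v\<in>vec_Pi A. \<Prod>i\<in>UNIV. h i (v $ i)) = (\<Prod>i\<in>UNIV. \<Sum>a\<in>A i. h i a)"
  unfolding vec_Pi_eq_image_PiE
  by (simp add: sum.reindex[OF inj_on_vec_lambda] prod_sum_PiE assms)

definition tent :: "int \<Rightarrow> nat" where
  "tent c = nat (3 - \<bar>c\<bar>)"

definition separated_on :: "'a set \<Rightarrow> ('a \<Rightarrow> int) set \<Rightarrow> bool" where
  "separated_on I D \<longleftrightarrow> (\<forall>\<delta>\<in>D. \<forall>\<delta>'\<in>D. \<delta> \<noteq> \<delta>' \<longrightarrow> (\<exists>i\<in>I. 2 \<le> \<bar>\<delta> i - \<delta>' i\<bar>))"

lemma separated_on_adjacent_layers: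
  assumes "separated_on (insert j I) D" "\<bar>a - b\<bar> \<le> 1"
  shows "separated_on I {\<delta>\<in>D. \<delta> j = a \<or> \<delta> j = b}"
  unfolding separated_on_def
proof (intro ballI impI)
  fix \<delta> \<delta>' assume \<delta>: "\<delta> \<in> {\<delta>\<in>D. \<delta> j = a \<or> \<delta> j = b}" "\<delta>' \<in> {\<delta>\<in>D. \<delta> j = a \<or> \<delta> j = b}"
    and "\<delta> \<noteq> \<delta>'"
  then obtain i where i: "i \<in> insert j I" "2 \<le> \<bar>\<delta> i - \<delta>' i\<bar>"
    using assms(1) by (auto simp: separated_on_def)
  have "\<bar>\<delta> j - \<delta>' j\<bar> \<le> 1" using \<delta> assms(2) by (auto simp: abs_minus_commute)
  with i show "\<exists>i\<in>I. 2 \<le> \<bar>\<delta> i - \<delta>' i\<bar>" by auto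
qed

text \<open>The weights 1, 2, 3, 2, 1 of the layers \<open>\<delta> j = -2, \<dots>, 2\<close> are the multiplicities
  with which the layers occur in the five unions \<open>{-2,-1}, {-1,0}, {0,1}, {1,2}, {0}\<close> of at most
  two adjacent layers, and each such union is separated on the remaining coordinates.\<close>

lemma sum_prod_tent_le:
  assumes "finite I" "finite D" "separated_on I D" "\<And>\<delta> i. \<delta> \<in> D \<Longrightarrow> i \<in> I \<Longrightarrow> \<bar>\<delta> i\<bar> \<le> 2"
  shows "(\<Sum>\<delta>\<in>D. \<Prod>i\<in>I. tent (\<delta> i)) \<le> 5 ^ card I"
  using assms
proof (induction I arbitrary: D rule: finite_induct)
  case empty
  then show ?case by (simp add: separated_on_def card_le_Suc0_iff_eq)
next
  case (insert j I)
  define \<Phi> where "\<Phi> X = (\<Sum>\<delta>\<in>X. \<Prod>i\<in>I. tent (\<delta> i))" for X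
  define layer where "layer c = {\<delta>\<in>D. \<delta> j = c}" for c
  have fin: "finite (layer c)" for c using insert.prems(1) by (simp add: layer_def)
  have range: "\<delta> j \<in> {-2..2}" if "\<delta> \<in> D" for \<delta>
    using insert.prems(3)[OF that, of j] by (simp add: abs_le_iff)
  have adjacent: "\<Phi> (layer a \<union> layer b) \<le> 5 ^ card I" if "\<bar>a - b\<bar> \<le> 1" for a b
  proof -
    have "layer a \<union> layer b = {\<delta>\<in>D. \<delta> j = a \<or> \<delta> j = b}" by (auto simp: layer_def)
    moreover have "\<Phi> {\<delta>\<in>D. \<delta> j = a \<or> \<delta> j = b} \<le> 5 ^ card I"
      unfolding \<Phi>_def using insert.prems
      by (intro insert.IH separated_on_adjacent_layers[OF insert.prems(2) that]) auto
    ultimately show ?thesis by simp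
  qed
  have disjoint: "\<Phi> (layer a \<union> layer b) = \<Phi> (layer a) + \<Phi> (layer b)" if "a \<noteq> b" for a b
    unfolding \<Phi>_def using that fin by (intro sum.union_disjoint) (auto simp: layer_def)
  have "(\<Sum>\<delta>\<in>D. \<Prod>i\<in>insert j I. tent (\<delta> i)) = (\<Sum>\<delta>\<in>D. tent (\<delta> j) * (\<Prod>i\<in>I. tent (\<delta> i)))"
    using insert.hyps by (intro sum.cong) auto
  also have "\<dots> = (\<Sum>c\<in>{-2..2}. \<Sum>\<delta>\<in>layer c. tent (\<delta> j) * (\<Prod>i\<in>I. tent (\<delta> i)))"
    unfolding layer_def
    by (rule sum.group[symmetric]) (use insert.prems(1) range in auto)
  also have "\<dots> = (\<Sum>c\<in>{-2..2}. tent c * \<Phi> (layer c))"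
    unfolding \<Phi>_def by (intro sum.cong refl) (auto simp: layer_def sum_distrib_left)
  also have "{-2..2::int} = {-2, -1, 0, 1, 2}" by auto
  also have "(\<Sum>c\<in>{-2, -1, 0, 1, 2}. tent c * \<Phi> (layer c)) =
      \<Phi> (layer (-2) \<union> layer (-1)) + \<Phi> (layer (-1) \<union> layer 0) + \<Phi> (layer 0 \<union> layer 1)
      + \<Phi> (layer 1 \<union> layer 2) + \<Phi> (layer 0 \<union> layer 0)"
    by (simp add: tent_def disjoint)
  also have "\<dots> \<le> 5 * 5 ^ card I"
    using adjacent[of "-2" "-1"] adjacent[of "-1" 0] adjacent[of 0 1] adjacent[of 1 2] adjacent[of 0 0]
    by simp
  also have "\<dots> = 5 ^ card (insert j I)" using insert.hyps by simp
  finally show ?case .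
qed

definition corner_window :: "int ^ 'n \<Rightarrow> (int ^ 'n::finite) set" where
  "corner_window z = vec_Pi (\<lambda>i. {z $ i .. z $ i + 2})"

lemma finite_corner_window: "finite (corner_window z)"
  unfolding corner_window_def by (rule finite_vec_Pi) simp

lemma cube_subset_box4_iff: "cube y \<subseteq> box4 z \<longleftrightarrow> y \<in> corner_window z"
proof
  assume sub: "cube y \<subseteq> box4 z"
  have "(\<chi> i. real_of_int (y $ i)) \<in> cube y" "(\<chi> i. real_of_int (y $ i) + 3/2) \<in> cube y"
    by (simp_all add: cube_def)
  then have bounds: "real_of_int (z $ i) \<le> y $ i \<and> y $ i + 3/2 < real_of_int (z $ i) + 4" for i
    using sub by (auto simp: box4_def)
  have "z $ i \<le> y $ i \<and> y $ i \<le> z $ i + 2" for i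
    using bounds[of i] by linarith
  then show "y \<in> corner_window z" by (simp add: corner_window_def vec_Pi_def)
next
  assume "y \<in> corner_window z"
  then have window: "z $ i \<le> y $ i \<and> y $ i \<le> z $ i + 2" for i
    by (simp add: corner_window_def vec_Pi_def)
  show "cube y \<subseteq> box4 z"
  proof
    fix x assume "x \<in> cube y"
    then have in_cube: "real_of_int (y $ i) \<le> x $ i \<and> x $ i < real_of_int (y $ i) + 2" for i
      by (simp add: cube_def)
    have "real_of_int (z $ i) \<le> x $ i \<and> x $ i < real_of_int (z $ i) + 4" for i
      using window[of i] in_cube[of i] by linarith
    then show "x \<in> box4 z" by (simp add: box4_def)
  qed
qed

lemma N_count_eq_card: "N_count T z = card (T \<inter> corner_window z)"
  unfolding N_count_def cube_subset_box4_iff by (rule arg_cong[where f = card]) blast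

lemma corner_window_iff: "y \<in> corner_window z \<longleftrightarrow> y - z \<in> vec_Pi (\<lambda>_. {0..2})"
proof -
  have "y $ i \<in> {z $ i .. z $ i + 2} \<longleftrightarrow> (y - z) $ i \<in> {0..2}" for i by auto
  then show ?thesis unfolding corner_window_def vec_Pi_def mem_Collect_eq by blast
qed

lemma cube_tiling_separated:
  fixes T :: "(int ^ 'n::finite) set"
  assumes "cube_tiling T" "y \<in> T" "y' \<in> T" "y \<noteq> y'"
  obtains i where "2 \<le> \<bar>y $ i - y' $ i\<bar>"
proof (rule ccontr)
  assume "\<not> thesis"
  with that have far: "\<not> 2 \<le> \<bar>y $ i - y' $ i\<bar>" for i by blast
  have close: "\<bar>y $ i - y' $ i\<bar> \<le> 1" for i using far[of i] by linarith
  define x :: "real ^ 'n" where "x = (\<chi> i. max (real_of_int (y $ i)) (real_of_int (y' $ i)) + 1/2)"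
  have "x \<in> cube y \<and> x \<in> cube y'"
  proof -
    have "real_of_int (y $ i) \<le> x $ i \<and> x $ i < real_of_int (y $ i) + 2 \<and>
        real_of_int (y' $ i) \<le> x $ i \<and> x $ i < real_of_int (y' $ i) + 2" for i
      using close[of i] unfolding x_def abs_le_iff max_def by simp
    then show ?thesis by (simp add: cube_def)
  qed
  then show False
    using assms unfolding cube_tiling_def by blast
qed

lemma image_plus_eq_vimage_minus:
  fixes c :: "'a::ab_group_add"
  shows "(+) c ` A = (\<lambda>y. y - c) -` A"
proof (intro set_eqI iffI)
  fix y assume "y \<in> (\<lambda>y. y - c) -` A"
  then have "c + (y - c) \<in> (+) c ` A" by blast
  then show "y \<in> (+) c ` A" by simp
qed auto

lemma corner_window_translate: "(+) c ` corner_window z = corner_window (c + z)"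
  unfolding image_plus_eq_vimage_minus corner_window_def vec_Pi_def
  by (auto simp: algebra_simps)

lemma cube_tiling_translate:
  assumes "cube_tiling T"
  shows "(+) (4 * k) ` T = T"
proof -
  have "y + 4 * k \<in> T \<and> y + 4 * (- k) \<in> T" if "y \<in> T" for y
    using assms that unfolding cube_tiling_def by blast
  then have "(+) (4 * k) ` T \<subseteq> T" "(\<lambda>y. y - 4 * k) ` T \<subseteq> T"
    by (auto simp: add.commute)
  then show ?thesis
    unfolding image_plus_eq_vimage_minus by blast
qed

lemma N_count_periodic:
  assumes "cube_tiling T"
  shows "N_count T (4 * k + z) = N_count T z"
proof -
  have "T \<inter> corner_window (4 * k + z) = (+) (4 * k) ` (T \<inter> corner_window z)"
    by (simp add: translation_Int corner_window_translate cube_tiling_translate[OF assms])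
  then show ?thesis by (simp add: N_count_eq_card card_image)
qed

lemma card_tent:
  fixes t y :: int
  assumes "\<bar>y - t\<bar> \<le> 2"
  shows "card {a \<in> {0..2}. t - a \<le> y \<and> y \<le> t - a + 2} = tent (y - t)"
proof -
  have "{a \<in> {0..2}. t - a \<le> y \<and> y \<le> t - a + 2} = {max 0 (t - y) .. min 2 (t - y + 2)}"
    by auto
  then show ?thesis
    using assms by (simp add: tent_def max_def min_def abs_if) (auto simp: algebra_simps)
qed

lemma card_windows_containing:
  assumes "\<And>i. \<bar>y $ i - t $ i\<bar> \<le> 2"
  shows "card {s \<in> vec_Pi (\<lambda>_. {0..2}). y \<in> corner_window (t - s)} = (\<Prod>i\<in>UNIV. tent (y $ i - t $ i))"
proof -
  have "card {s \<in> vec_Pi (\<lambda>_. {0..2}). y \<in> corner_window (t - s)}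
      = card (vec_Pi (\<lambda>i. {a \<in> {0..2}. t $ i - a \<le> y $ i \<and> y $ i \<le> t $ i - a + 2}))"
    by (rule arg_cong[where f = card]) (auto simp: vec_Pi_def corner_window_def)
  also have "\<dots> = (\<Prod>i\<in>UNIV. tent (y $ i - t $ i))"
    unfolding card_vec_Pi using assms by (intro prod.cong refl card_tent)
  finally show ?thesis .
qed

lemma corner_window_subset_near:
  assumes "s \<in> vec_Pi (\<lambda>_. {0..2})"
  shows "corner_window (t - s) \<subseteq> vec_Pi (\<lambda>i. {t $ i - 2 .. t $ i + 2})"
proof
  fix y assume y: "y \<in> corner_window (t - s)"
  have "t $ i - 2 \<le> y $ i \<and> y $ i \<le> t $ i + 2" for i
  proof -
    have "0 \<le> s $ i \<and> s $ i \<le> 2" using assms by (simp add: vec_Pi_def)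
    moreover have "t $ i - s $ i \<le> y $ i \<and> y $ i \<le> t $ i - s $ i + 2"
      using y by (simp add: corner_window_def vec_Pi_def)
    ultimately show ?thesis by linarith
  qed
  then show "y \<in> vec_Pi (\<lambda>i. {t $ i - 2 .. t $ i + 2})" by (simp add: vec_Pi_def)
qed

lemma separated_on_cube_tiling:
  fixes T :: "(int ^ 'n::finite) set"
  assumes "cube_tiling T" "E \<subseteq> T"
  shows "separated_on UNIV ((\<lambda>y. vec_nth (y - t)) ` E)"
  unfolding separated_on_def
proof (intro ballI impI)
  fix \<delta> \<delta>' assume "\<delta> \<in> (\<lambda>y. vec_nth (y - t)) ` E" "\<delta>' \<in> (\<lambda>y. vec_nth (y - t)) ` E" "\<delta> \<noteq> \<delta>'"
  then obtain y y' where "y \<in> T" "y' \<in> T" "y \<noteq> y'" "\<delta> = vec_nth (y - t)" "\<delta>' = vec_nth (y' - t)"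
    using assms(2) by auto
  moreover obtain i where "2 \<le> \<bar>y $ i - y' $ i\<bar>"
    using cube_tiling_separated[OF assms(1)] calculation(1-3) by blast
  ultimately show "\<exists>i\<in>UNIV. 2 \<le> \<bar>\<delta> i - \<delta>' i\<bar>" by auto
qed

lemma sum_N_count_shifts_le:
  fixes T :: "(int ^ 'n::finite) set"
  assumes "cube_tiling T"
  shows "(\<Sum>s\<in>vec_Pi (\<lambda>_. {0..2}). N_count T (t - s)) \<le> 5 ^ CARD('n)"
proof -
  define S :: "(int ^ 'n) set" where "S = vec_Pi (\<lambda>_. {0..2})"
  define E where "E = T \<inter> vec_Pi (\<lambda>i. {t $ i - 2 .. t $ i + 2})"
  have "finite S" unfolding S_def by (rule finite_vec_Pi) simp
  have "finite E" unfolding E_def by (intro finite_Int disjI2 finite_vec_Pi) simp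
  have near: "\<bar>y $ i - t $ i\<bar> \<le> 2" if "y \<in> E" for y i
  proof -
    have "t $ i - 2 \<le> y $ i \<and> y $ i \<le> t $ i + 2" using that by (simp add: E_def vec_Pi_def)
    then show ?thesis by (simp add: abs_le_iff)
  qed
  have "T \<inter> corner_window (t - s) = {y \<in> E. y \<in> corner_window (t - s)}" if "s \<in> S" for s
    using corner_window_subset_near[of s t] that unfolding E_def S_def by blast
  then have "(\<Sum>s\<in>S. N_count T (t - s)) = (\<Sum>s\<in>S. card {y \<in> E. y \<in> corner_window (t - s)})"
    by (simp add: N_count_eq_card)
  also have "\<dots> = (\<Sum>y\<in>E. \<Prod>i\<in>UNIV. tent (y $ i - t $ i))"
  proof (rule sum_multicount_gen)
    show "\<forall>y\<in>E. card {s \<in> S. y \<in> corner_window (t - s)} = (\<Prod>i\<in>UNIV. tent (y $ i - t $ i))"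
      unfolding S_def using card_windows_containing near by blast
  qed (fact+)
  also have "\<dots> = (\<Sum>\<delta>\<in>(\<lambda>y. vec_nth (y - t)) ` E. \<Prod>i\<in>UNIV. tent (\<delta> i))"
    by (subst sum.reindex) (auto simp: inj_on_def fun_eq_iff vec_eq_iff)
  also have "\<dots> \<le> 5 ^ CARD('n)"
  proof (rule sum_prod_tent_le)
    show "separated_on UNIV ((\<lambda>y. vec_nth (y - t)) ` E)"
      using separated_on_cube_tiling[OF assms] by (simp add: E_def)
    show "finite ((\<lambda>y. vec_nth (y - t)) ` E)" using \<open>finite E\<close> by simp
    show "\<bar>\<delta> i\<bar> \<le> 2" if "\<delta> \<in> (\<lambda>y. vec_nth (y - t)) ` E" for \<delta> i
      using that near by auto
  qed simp
  finally show ?thesis unfolding S_def .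
qed

lemma card_cube_tiling_Int_box_le:
  fixes T :: "(int ^ 'n::finite) set"
  assumes "cube_tiling T"
  shows "card (T \<inter> vec_Pi (\<lambda>_. {0..3})) \<le> 2 ^ CARD('n)"
proof -
  let ?half = "\<lambda>y :: int ^ 'n. \<chi> i. y $ i div 2"
  have "inj_on ?half T"
  proof (rule inj_onI, rule ccontr)
    fix y y' assume "y \<in> T" "y' \<in> T" "?half y = ?half y'" "y \<noteq> y'"
    then obtain i where "2 \<le> \<bar>y $ i - y' $ i\<bar>" "y $ i div 2 = y' $ i div 2"
      using cube_tiling_separated[OF assms] by (metis vec_lambda_beta)
    then show False by linarith
  qed
  moreover have "?half ` vec_Pi (\<lambda>_. {0..3}) \<subseteq> vec_Pi (\<lambda>_. {0..1})"
  proof (rule image_subsetI)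
    fix y :: "int ^ 'n" assume "y \<in> vec_Pi (\<lambda>_. {0..3})"
    then have bounds: "0 \<le> y $ i \<and> y $ i \<le> 3" for i by (simp add: vec_Pi_def)
    have "0 \<le> y $ i div 2 \<and> y $ i div 2 \<le> 1" for i using bounds[of i] by linarith
    then show "?half y \<in> vec_Pi (\<lambda>_. {0..1})" by (simp add: vec_Pi_def)
  qed
  ultimately have "card (T \<inter> vec_Pi (\<lambda>_. {0..3})) \<le> card (vec_Pi (\<lambda>_::'n. {0..1::int}))"
    by (intro card_inj_on_le[of ?half] finite_vec_Pi) (auto simp: inj_on_Int)
  also have "\<dots> = 2 ^ CARD('n)" by (simp add: card_vec_Pi)
  finally show ?thesis .
qed

definition vec_mod4 :: "int ^ 'n \<Rightarrow> int ^ 'n::finite" where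
  "vec_mod4 y = (\<chi> i. y $ i mod 4)"

lemma vec_div4_mod4_eq: "4 * (\<chi> i. y $ i div 4) + vec_mod4 y = y"
  by (simp add: vec_mod4_def vec_eq_iff)

lemma vec_mod4_mem_box: "vec_mod4 y \<in> vec_Pi (\<lambda>_. {0..3})"
proof -
  have bounds: "0 \<le> y $ i mod 4 \<and> y $ i mod 4 < 4" for i by simp
  have "y $ i mod 4 \<in> {0..3}" for i
    unfolding atLeastAtMost_iff using bounds[of i] by linarith
  then show ?thesis by (simp add: vec_mod4_def vec_Pi_def)
qed

lemma cube_tiling_vec_mod4:
  assumes "cube_tiling T" "y \<in> T"
  shows "vec_mod4 y \<in> T"
proof -
  have "vec_mod4 y = 4 * - (\<chi> i. y $ i div 4) + y"
    using vec_div4_mod4_eq[of y] by (simp add: algebra_simps)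
  then show ?thesis
    using cube_tiling_translate[OF assms(1)] assms(2) by (metis image_eqI)
qed

lemma N_count_vec_mod4:
  assumes "cube_tiling T"
  shows "N_count T (vec_mod4 y - (y - z)) = N_count T z"
proof -
  have "vec_mod4 y - (y - z) = 4 * - (\<chi> i. y $ i div 4) + z"
    using vec_div4_mod4_eq[of y] by (simp add: algebra_simps)
  then show ?thesis by (simp only:) (rule N_count_periodic[OF assms])
qed

lemma inj_on_vec_mod4_diff:
  "inj_on (\<lambda>(z, y). (vec_mod4 y, y - z)) (vec_Pi (\<lambda>_. {0..3}) \<times> UNIV)"
proof (rule inj_onI, clarify)
  fix z y z' y' :: "int ^ 'n"
  assume "z \<in> vec_Pi (\<lambda>_. {0..3})" "z' \<in> vec_Pi (\<lambda>_. {0..3})"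
    and "vec_mod4 y = vec_mod4 y'" and diff: "y - z = y' - z'"
  then have coords: "z $ i \<in> {0..3} \<and> z' $ i \<in> {0..3} \<and> y $ i mod 4 = y' $ i mod 4 \<and>
      y $ i - z $ i = y' $ i - z' $ i" for i
    by (simp add: vec_Pi_def vec_mod4_def vec_eq_iff flip: vector_minus_component)
  have "z $ i = z' $ i" for i using coords[of i] by simp presburger
  then show "z = z' \<and> y = y'" using diff by (simp add: vec_eq_iff)
qed

lemma sum_N_count_square_le:
  fixes T :: "(int ^ 'n::finite) set"
  assumes "cube_tiling T"
  shows "(\<Sum>z\<in>vec_Pi (\<lambda>_. {0..3}). N_count T z ^ 2) \<le> 10 ^ CARD('n)"
proof -
  define Z :: "(int ^ 'n) set" where "Z = vec_Pi (\<lambda>_. {0..3})"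
  define S :: "(int ^ 'n) set" where "S = vec_Pi (\<lambda>_. {0..2})"
  define P where "P = Sigma Z (\<lambda>z. T \<inter> corner_window z)"
  define \<phi> :: "(int ^ 'n) \<times> (int ^ 'n) \<Rightarrow> (int ^ 'n) \<times> (int ^ 'n)"
    where "\<phi> = (\<lambda>(z, y). (vec_mod4 y, y - z))"
  have "finite Z" "finite S" unfolding Z_def S_def by (simp_all add: finite_vec_Pi)
  have "inj_on \<phi> P"
    unfolding \<phi>_def by (rule inj_on_subset[OF inj_on_vec_mod4_diff]) (auto simp: P_def Z_def)
  have "\<phi> ` P \<subseteq> (T \<inter> Z) \<times> S"
  proof (rule image_subsetI)
    fix p assume "p \<in> P"
    then obtain z y where "p = (z, y)" "y \<in> T" "y - z \<in> S"
      by (auto simp: P_def S_def corner_window_iff)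
    then show "\<phi> p \<in> (T \<inter> Z) \<times> S"
      using cube_tiling_vec_mod4[OF assms] vec_mod4_mem_box by (simp add: \<phi>_def Z_def)
  qed
  have "(\<Sum>z\<in>Z. N_count T z ^ 2) = (\<Sum>z\<in>Z. \<Sum>y\<in>T \<inter> corner_window z. N_count T z)"
    by (simp add: power2_eq_square N_count_eq_card)
  also have "\<dots> = (\<Sum>z\<in>Z. \<Sum>y\<in>T \<inter> corner_window z. N_count T (vec_mod4 y - (y - z)))"
    by (simp add: N_count_vec_mod4[OF assms])
  also have "\<dots> = (\<Sum>(z, y)\<in>P. N_count T (vec_mod4 y - (y - z)))"
    unfolding P_def by (rule sum.Sigma) (simp_all add: \<open>finite Z\<close> finite_corner_window)
  also have "\<dots> = (\<Sum>(t, s)\<in>\<phi> ` P. N_count T (t - s))"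
    by (subst sum.reindex[OF \<open>inj_on \<phi> P\<close>]) (simp add: \<phi>_def split_def)
  also have "\<dots> \<le> (\<Sum>(t, s)\<in>(T \<inter> Z) \<times> S. N_count T (t - s))"
    by (rule sum_mono2) (use \<open>\<phi> ` P \<subseteq> _\<close> \<open>finite Z\<close> \<open>finite S\<close> in auto)
  also have "\<dots> = (\<Sum>t\<in>T \<inter> Z. \<Sum>s\<in>S. N_count T (t - s))"
    by (rule sum.cartesian_product[symmetric])
  also have "\<dots> \<le> (\<Sum>t\<in>T \<inter> Z. 5 ^ CARD('n))"
    unfolding S_def by (rule sum_mono) (rule sum_N_count_shifts_le[OF assms])
  also have "\<dots> \<le> 2 ^ CARD('n) * 5 ^ CARD('n)"
    using card_cube_tiling_Int_box_le[OF assms] unfolding Z_def by simp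
  also have "\<dots> = 10 ^ CARD('n)" by (simp flip: power_mult_distrib)
  finally show ?thesis unfolding Z_def .
qed

lemma card_even_window: "card {a :: int. even a \<and> c \<le> a \<and> a \<le> c + 2} = (if even c then 2 else 1)"
proof (cases "even c")
  case True
  then have "{a. even a \<and> c \<le> a \<and> a \<le> c + 2} = {c, c + 2}"
    by (auto; presburger)
  with True show ?thesis by simp
next
  case False
  then have "{a. even a \<and> c \<le> a \<and> a \<le> c + 2} = {c + 1}"
    by (auto; presburger)
  with False show ?thesis by simp
qed

lemma N_count_regular_tiling:
  "N_count (regular_tiling :: (int ^ 'n::finite) set) z = (\<Prod>i\<in>UNIV. if even (z $ i) then 2 else 1)"
proof -
  have "regular_tiling \<inter> corner_window z = vec_Pi (\<lambda>i. {a. even a \<and> z $ i \<le> a \<and> a \<le> z $ i + 2})"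
    by (auto simp: regular_tiling_def corner_window_def vec_Pi_def)
  then show ?thesis by (simp add: N_count_eq_card card_vec_Pi card_even_window)
qed

lemma sum_N_count_square_regular_tiling:
  "(\<Sum>z\<in>vec_Pi (\<lambda>_. {0..3}). N_count (regular_tiling :: (int ^ 'n::finite) set) z ^ 2) = 10 ^ CARD('n)"
proof -
  have "{0..3 :: int} = {0, 1, 2, 3}" by auto
  then have ten: "(\<Sum>a\<in>{0..3 :: int}. (if even a then 2 else 1) ^ 2) = (10 :: nat)" by simp
  have "(\<Sum>z\<in>vec_Pi (\<lambda>_. {0..3}). N_count (regular_tiling :: (int ^ 'n) set) z ^ 2)
      = (\<Sum>z\<in>vec_Pi (\<lambda>_::'n. {0..3::int}). \<Prod>i\<in>UNIV. (if even (z $ i) then 2 else 1) ^ 2)"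
    by (simp add: N_count_regular_tiling prod_power_distrib)
  also have "\<dots> = (\<Prod>i\<in>(UNIV :: 'n set). \<Sum>a\<in>{0..3::int}. (if even a then 2 else 1) ^ 2)"
    by (rule sum_prod_vec_Pi) simp
  also have "\<dots> = 10 ^ CARD('n)" by (simp add: ten)
  finally show ?thesis .
qed

lemma second_moment_eq:
  "second_moment (T :: (int ^ 'n::finite) set)
     = real (\<Sum>z\<in>vec_Pi (\<lambda>_. {0..3}). N_count T z ^ 2) / 4 ^ CARD('n)"
  by (simp add: second_moment_def vec_Pi_def)

theorem theorem4:
  fixes T :: "(int ^ 'n::finite) set"
  assumes "cube_tiling T"
  shows "second_moment T \<le> second_moment (regular_tiling :: (int ^ 'n) set)"
proof -
  have "real (\<Sum>z\<in>vec_Pi (\<lambda>_. {0..3}). N_count T z ^ 2) \<le> real (10 ^ CARD('n))"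
    using sum_N_count_square_le[OF assms] by (rule of_nat_mono)
  then show ?thesis
    unfolding second_moment_eq sum_N_count_square_regular_tiling by (rule divide_right_mono) simp
qed

end
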